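(* Let $H=\langle a,b,c\mid ac=ca,\ bc=cb,\ [a,b]=c\rangle$ be the integral Heisenberg group, identified with the group of matrices $\begin{bmatrix}1&x&z\\ &1&y\\ &&1\end{bmatrix}$ with $x,y,z\in\mathbb{Z}$. Let $L:H\rightarrow\mathbb{R}$ be a semi-norm, i.e. $L(gh)\le L(g)+L(h)$ and $L(g)=L(g^{-1})$ for any $g,h\in H$, and let $\mathrm{sL}(g)=\lim_{n\to\infty}\frac{L(g^n)}{n}$ be its stable norm. There exists a constant $K$ such that \[ \mathrm{sL}(g)\le K(|x|+|y|) \] for any $g=\begin{bmatrix}1&x&z\\ &1&y\\ &&1\end{bmatrix}\in H$.
   Context: One may take $K=\max\{L(s):s\in S\}$ with $S=\{a,b,a^{-1},b^{-1}\}$; the proof uses that the stable word length with respect to $S$ of such $g$ equals $|x|+|y|$. *)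

theory Defs
  imports "HOL-Analysis.Analysis"
begin

text \<open>The integral Heisenberg group, realised as upper unitriangular integer
3x3 matrices; the triple (x,y,z) stands for the matrix with entries
x (position 1,2), y (position 2,3), z (position 1,3).\<close>

type_synonym heis = "int \<times> int \<times> int"

definition heis_mult :: "heis \<Rightarrow> heis \<Rightarrow> heis" where
  "heis_mult g h = (case g of (x, y, z) \<Rightarrow> case h of (x', y', z') \<Rightarrow>
      (x + x', y + y', z + z' + x * y'))"

definition heis_one :: heis where
  "heis_one = (0, 0, 0)"

definition heis_inv :: "heis \<Rightarrow> heis" where
  "heis_inv g = (case g of (x, y, z) \<Rightarrow> (- x, - y, x * y - z))"

fun heis_pow :: "heis \<Rightarrow> nat \<Rightarrow> heis" where
  "heis_pow g 0 = heis_one"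
| "heis_pow g (Suc n) = heis_mult g (heis_pow g n)"

definition heis_seminorm :: "(heis \<Rightarrow> real) \<Rightarrow> bool" where
  "heis_seminorm L \<longleftrightarrow>
     (\<forall>g h. L (heis_mult g h) \<le> L g + L h) \<and> (\<forall>g. L g = L (heis_inv g))"

definition stable_norm :: "(heis \<Rightarrow> real) \<Rightarrow> heis \<Rightarrow> real" where
  "stable_norm L g = lim (\<lambda>n. L (heis_pow g n) / real n)"

end

theory Submission
  imports Defs
begin

text \<open>
  The length L is subadditive along powers, so by Fekete's lemma the stable norm exists and equals
  the infimum of L(g^n)/n. Every central element (0,0,W) with |W| \<le> m^2 is the product of the
  commutator [a^q, b^m] = (0,0,qm) with |q| \<le> 2m and of c^r with 0 \<le> r < m, so its length is
  O(m). The power g^n of g = (x,y,z) is a^(nx) b^(ny) times a central element whose coordinate is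
  O((n(|x|+|y|) + sqrt n (|z|+1))^2); taking n = k^2 gives L(g^n) \<le> 6 M n (|x|+|y|) + O(k),
  with M the sum of the lengths of a, b, c and of the identity, hence sL(g) \<le> 6 M (|x|+|y|).
\<close>

lemma subadditive_le_mult_add:
  fixes a :: "nat \<Rightarrow> real"
  assumes sub: "\<And>m n. a (m + n) \<le> a m + a n"
  shows "a (q * m + r) \<le> real q * a m + a r"
proof (induction q)
  case (Suc q)
  have "a (Suc q * m + r) = a (m + (q * m + r))"
    by (simp add: algebra_simps)
  also have "\<dots> \<le> a m + a (q * m + r)"
    by (rule sub)
  finally show ?case
    using Suc by (simp add: algebra_simps)
qed simp

lemma subadditive_quotient_le:
  fixes a :: "nat \<Rightarrow> real"
  assumes sub: "\<And>m n. a (m + n) \<le> a m + a n" and nonneg: "\<And>n. a n \<ge> 0"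
    and "m \<ge> 1" "n \<ge> 1"
  shows "a n / n \<le> a m / m + (\<Sum>r<m. a r) / n"
proof -
  have "a n \<le> real (n div m) * a m + a (n mod m)"
    using subadditive_le_mult_add[of a "n div m" m "n mod m", OF sub] by simp
  also have "real (n div m) * a m \<le> real n / real m * a m"
  proof (rule mult_right_mono[OF _ nonneg])
    have "real (n div m) * real m \<le> real n"
      by (metis of_nat_le_iff of_nat_mult div_times_less_eq_dividend)
    then show "real (n div m) \<le> real n / real m"
      using \<open>m \<ge> 1\<close> by (simp add: field_simps)
  qed
  also have "a (n mod m) \<le> (\<Sum>r<m. a r)"
    using \<open>m \<ge> 1\<close> by (intro member_le_sum) (auto intro: nonneg)
  finally show ?thesis
    using \<open>n \<ge> 1\<close> by (simp add: field_simps)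
qed

lemma subadditive_tendsto_Inf:
  fixes a :: "nat \<Rightarrow> real"
  assumes sub: "\<And>m n. a (m + n) \<le> a m + a n" and nonneg: "\<And>n. a n \<ge> 0"
  shows "(\<lambda>n. a n / n) \<longlonglongrightarrow> (INF n\<in>{1..}. a n / n)"
proof -
  define l where "l = (INF n\<in>{1..}. a n / n)"
  have bdd: "bdd_below ((\<lambda>n. a n / n) ` {1..})"
    by (rule bdd_belowI[where m = 0]) (auto intro: divide_nonneg_nonneg nonneg)
  show ?thesis
    unfolding l_def[symmetric]
  proof (rule order_tendstoI)
    fix u assume "u < l"
    have "l \<le> a n / n" if "n \<ge> 1" for n
      unfolding l_def using bdd that by (auto intro: cINF_lower)
    then show "\<forall>\<^sub>F n in sequentially. u < a n / n"
      using \<open>u < l\<close> by (intro eventually_sequentiallyI[of 1]) fastforce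
  next
    fix u assume "l < u"
    then obtain m where m: "m \<ge> 1" "a m / m < u"
      using cINF_less_iff[OF _ bdd] unfolding l_def by auto
    have "(\<lambda>n. (\<Sum>r<m. a r) / real n) \<longlonglongrightarrow> 0"
      by (rule lim_const_over_n)
    then have "\<forall>\<^sub>F n in sequentially. (\<Sum>r<m. a r) / n < u - a m / m"
      using m by (intro order_tendstoD) auto
    then show "\<forall>\<^sub>F n in sequentially. a n / n < u"
      using eventually_ge_at_top[of 1]
    proof eventually_elim
      case (elim n)
      then show ?case
        using subadditive_quotient_le[of a, OF sub nonneg m(1) elim(2)] by linarith
    qed
  qed
qed

lemma heis_mult_assoc: "heis_mult (heis_mult g h) k = heis_mult g (heis_mult h k)"
  by (cases g; cases h; cases k) (simp add: heis_mult_def algebra_simps)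

lemma heis_mult_one_left [simp]: "heis_mult heis_one g = g"
  by (cases g) (simp add: heis_mult_def heis_one_def)

lemma heis_pow_add: "heis_pow g (m + n) = heis_mult (heis_pow g m) (heis_pow g n)"
  by (induction m) (simp_all add: heis_mult_assoc)

lemma heis_pow_eq:
  "heis_pow (x, y, z) n = (int n * x, int n * y, int n * z + x * y * int (n choose 2))"
  by (induction n) (simp_all add: heis_one_def heis_mult_def numeral_2_eq_2 algebra_simps)

lemma heis_pow_square_central_defect_le:
  fixes x y z :: int
  assumes "k \<ge> 1"
  defines "n \<equiv> k * k"
  shows "\<bar>int n * z + x * y * int (n choose 2) - (int n * x) * (int n * y)\<bar>
    \<le> (int n * (\<bar>x\<bar> + \<bar>y\<bar>) + int k * (\<bar>z\<bar> + 1))\<^sup>2"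
proof -
  have "n choose 2 \<le> n * n"
    by (simp add: choose_two le_trans[OF div_le_dividend])
  then have choose_defect: "0 \<le> int n * int n - int (n choose 2)"
    "int n * int n - int (n choose 2) \<le> int n * int n"
    by (simp_all flip: of_nat_mult)
  have "int n * z + x * y * int (n choose 2) - (int n * x) * (int n * y)
      = int n * z - x * y * (int n * int n - int (n choose 2))"
    by (simp add: algebra_simps)
  also have "\<bar>\<dots>\<bar> \<le> int n * \<bar>z\<bar> + \<bar>x\<bar> * \<bar>y\<bar> * (int n * int n)"
    using choose_defect by (auto simp: abs_mult intro!: order_trans[OF abs_triangle_ineq4] mult_left_mono)
  also have "\<dots> \<le> (int k * (\<bar>z\<bar> + 1))\<^sup>2 + (int n * (\<bar>x\<bar> + \<bar>y\<bar>))\<^sup>2"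
  proof (rule add_mono)
    show "int n * \<bar>z\<bar> \<le> (int k * (\<bar>z\<bar> + 1))\<^sup>2"
      unfolding n_def power2_eq_square by (simp add: algebra_simps mult_left_mono)
    show "\<bar>x\<bar> * \<bar>y\<bar> * (int n * int n) \<le> (int n * (\<bar>x\<bar> + \<bar>y\<bar>))\<^sup>2"
      unfolding power2_eq_square by (simp add: algebra_simps mult_right_mono)
  qed
  also have "\<dots> \<le> (int n * (\<bar>x\<bar> + \<bar>y\<bar>) + int k * (\<bar>z\<bar> + 1))\<^sup>2"
    by (simp add: power2_eq_square algebra_simps)
  finally show ?thesis .
qed

locale heis_seminormed =
  fixes L :: "heis \<Rightarrow> real"
  assumes seminorm: "heis_seminorm L"
begin

lemma mult_le: "L (heis_mult g h) \<le> L g + L h"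
  using seminorm unfolding heis_seminorm_def by blast

lemma inv_eq: "L (heis_inv g) = L g"
  using seminorm unfolding heis_seminorm_def by metis

lemma nonneg: "0 \<le> L g"
proof -
  have "heis_mult g (heis_inv g) = heis_one"
    by (cases g) (simp add: heis_mult_def heis_inv_def heis_one_def)
  then have "L heis_one \<le> 2 * L g"
    using mult_le[of g "heis_inv g"] inv_eq[of g] by simp
  moreover have "L heis_one \<le> 2 * L heis_one"
    using mult_le[of heis_one heis_one] by simp
  ultimately show ?thesis
    by linarith
qed

lemma pow_le: "L (heis_pow g n) \<le> real n * L g + L heis_one"
proof (induction n)
  case (Suc n)
  then show ?case
    using mult_le[of g "heis_pow g n"] by (simp add: algebra_simps)
qed simp

lemma scaled_le:
  assumes "x * y = 0"
  shows "L (k * x, k * y, k * z) \<le> real_of_int \<bar>k\<bar> * L (x, y, z) + L heis_one"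
proof (cases "k \<ge> 0")
  case True
  then have "(k * x, k * y, k * z) = heis_pow (x, y, z) (nat k)"
    using assms by (simp add: heis_pow_eq)
  then show ?thesis
    using pow_le[of "(x, y, z)" "nat k"] True by simp
next
  case False
  then have "(k * x, k * y, k * z) = heis_inv (heis_pow (x, y, z) (nat (- k)))"
    using assms by (cases "x = 0") (simp_all add: heis_pow_eq heis_inv_def)
  then show ?thesis
    using pow_le[of "(x, y, z)" "nat (- k)"] inv_eq False by simp
qed

lemma mult3_le: "L (heis_mult f (heis_mult g h)) \<le> L f + L g + L h"
  using mult_le[of f "heis_mult g h"] mult_le[of g h] by linarith

lemma split_le: "L (X, Y, Z) \<le> L (X, 0, 0) + L (0, Y, 0) + L (0, 0, Z - X * Y)"
proof -
  have "L (X, Y, Z) = L (heis_mult (X, 0, 0) (heis_mult (0, Y, 0) (0, 0, Z - X * Y)))"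
    by (simp add: heis_mult_def)
  then show ?thesis
    using mult3_le by simp
qed

lemma commutator_le:
  "L (0, 0, q * m)
    \<le> 2 * real_of_int \<bar>q\<bar> * L (1, 0, 0) + 2 * real_of_int \<bar>m\<bar> * L (0, 1, 0) + 4 * L heis_one"
proof -
  have "L (0, 0, q * m)
      = L (heis_mult (q, 0, 0) (heis_mult (0, m, 0) (heis_mult (- q, 0, 0) (0, - m, 0))))"
    by (simp add: heis_mult_def)
  also have "\<dots> \<le> L (q, 0, 0) + L (0, m, 0) + L (- q, 0, 0) + L (0, - m, 0)"
    using mult3_le[of "(q, 0, 0)" "(0, m, 0)" "heis_mult (- q, 0, 0) (0, - m, 0)"]
      mult_le[of "(- q, 0, 0)" "(0, - m, 0)"]
    by linarith
  also have "\<dots>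
      \<le> 2 * real_of_int \<bar>q\<bar> * L (1, 0, 0) + 2 * real_of_int \<bar>m\<bar> * L (0, 1, 0) + 4 * L heis_one"
    using scaled_le[where x = 1 and y = 0 and z = 0 and k = q]
      scaled_le[where x = 1 and y = 0 and z = 0 and k = "- q"]
      scaled_le[where x = 0 and y = 1 and z = 0 and k = m]
      scaled_le[where x = 0 and y = 1 and z = 0 and k = "- m"]
    by simp
  finally show ?thesis .
qed

definition gen_norm :: real where
  "gen_norm = L (1, 0, 0) + L (0, 1, 0) + L (0, 0, 1) + L heis_one"

lemma gen_norm_ge:
  "L (1, 0, 0) \<le> gen_norm" "L (0, 1, 0) \<le> gen_norm" "L (0, 0, 1) \<le> gen_norm"
  "L heis_one \<le> gen_norm"
  unfolding gen_norm_def
  using nonneg[of "(1, 0, 0)"] nonneg[of "(0, 1, 0)"] nonneg[of "(0, 0, 1)"] nonneg[of heis_one]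
  by linarith+

lemma central_le:
  assumes "m \<ge> 1" "\<bar>W\<bar> \<le> m\<^sup>2"
  shows "L (0, 0, W) \<le> 5 * gen_norm * real_of_int m"
proof -
  define q r where "q = W div m" and "r = W mod m"
  have W: "W = q * m + r" and r: "0 \<le> r" "r < m"
    using assms(1) by (simp_all add: q_def r_def)
  have "\<bar>q\<bar> * m = \<bar>W - r\<bar>"
    using W assms(1) by (simp add: abs_mult)
  also have "\<dots> \<le> (m + 1) * m"
    using assms(2) r by (simp add: power2_eq_square algebra_simps)
  finally have q: "\<bar>q\<bar> \<le> 2 * m"
    using assms(1) by simp
  have "L (0, 0, W) = L (heis_mult (0, 0, q * m) (0, 0, r))"
    using W by (simp add: heis_mult_def)
  also have "\<dots> \<le> L (0, 0, q * m) + L (0, 0, r)"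
    by (rule mult_le)
  also have "\<dots> \<le> 2 * \<bar>q\<bar> * L (1, 0, 0) + 2 * m * L (0, 1, 0) + 4 * L heis_one
      + (r * L (0, 0, 1) + L heis_one)"
    using commutator_le[of q m] scaled_le[where x = 0 and y = 0 and z = 1 and k = r] r assms(1)
    by simp
  also have "\<dots> \<le> 5 * gen_norm * m"
  proof -
    have "\<bar>q\<bar> * L (1, 0, 0) \<le> (2 * m) * L (1, 0, 0)" "r * L (0, 0, 1) \<le> m * L (0, 0, 1)"
      "0 \<le> m * L (1, 0, 0)" "0 \<le> m * L (0, 1, 0)" "0 \<le> m * L (0, 0, 1)"
      using q r assms(1) nonneg by (auto intro!: mult_right_mono)
    moreover have "L heis_one \<le> m * L heis_one"
      using mult_right_mono[of 1 "real_of_int m"] assms(1) nonneg[of heis_one] by simp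
    ultimately show ?thesis
      unfolding gen_norm_def by (simp add: algebra_simps)
  qed
  finally show ?thesis .
qed

lemma pow_square_le:
  assumes "k \<ge> 1"
  shows "L (heis_pow (x, y, z) (k * k))
    \<le> real (k * k) * (6 * gen_norm * (\<bar>x\<bar> + \<bar>y\<bar>)) + real k * (7 * gen_norm * (\<bar>z\<bar> + 1))"
proof -
  define n where "n = k * k"
  define W where "W = int n * z + x * y * int (n choose 2) - (int n * x) * (int n * y)"
  define m where "m = int n * (\<bar>x\<bar> + \<bar>y\<bar>) + int k * (\<bar>z\<bar> + 1)"
  have "int k * 1 \<le> int k * (\<bar>z\<bar> + 1)" "0 \<le> int n * (\<bar>x\<bar> + \<bar>y\<bar>)"
    by (intro mult_left_mono) auto
  then have m: "m \<ge> 1"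
    using assms unfolding m_def by linarith
  have one_le_kz: "1 \<le> real k * (\<bar>z\<bar> + 1)"
    using assms by (intro mult_ge1_I) auto
  have "\<bar>W\<bar> \<le> m\<^sup>2"
    unfolding W_def m_def n_def by (rule heis_pow_square_central_defect_le[OF assms])
  have "L (heis_pow (x, y, z) n) \<le> L (int n * x, 0, 0) + L (0, int n * y, 0) + L (0, 0, W)"
    unfolding W_def heis_pow_eq by (rule split_le)
  also have "\<dots> \<le> (real n * \<bar>x\<bar> * L (1, 0, 0) + L heis_one)
      + (real n * \<bar>y\<bar> * L (0, 1, 0) + L heis_one) + 5 * gen_norm * m"
    using scaled_le[where x = 1 and y = 0 and z = 0 and k = "int n * x"]
      scaled_le[where x = 0 and y = 1 and z = 0 and k = "int n * y"]
      central_le[OF m \<open>\<bar>W\<bar> \<le> m\<^sup>2\<close>]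
    by (simp add: abs_mult)
  also have "\<dots> \<le> real n * (6 * gen_norm * (\<bar>x\<bar> + \<bar>y\<bar>)) + real k * (7 * gen_norm * (\<bar>z\<bar> + 1))"
  proof -
    have "real n * \<bar>x\<bar> * L (1, 0, 0) \<le> real n * \<bar>x\<bar> * gen_norm"
      "real n * \<bar>y\<bar> * L (0, 1, 0) \<le> real n * \<bar>y\<bar> * gen_norm"
      using gen_norm_ge by (auto intro!: mult_left_mono)
    moreover have "gen_norm * 1 \<le> gen_norm * (real k * (\<bar>z\<bar> + 1))"
      using one_le_kz gen_norm_ge(4) nonneg[of heis_one] by (intro mult_left_mono) auto
    ultimately show ?thesis
      using gen_norm_ge(4) unfolding m_def by (simp add: algebra_simps)
  qed
  finally show ?thesis
    unfolding n_def .
qed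

lemma stable_norm_le:
  assumes "n \<ge> 1"
  shows "stable_norm L g \<le> L (heis_pow g n) / n"
proof -
  have "(\<lambda>n. L (heis_pow g n) / n) \<longlonglongrightarrow> (INF n\<in>{1..}. L (heis_pow g n) / n)"
    by (rule subadditive_tendsto_Inf[where a = "\<lambda>n. L (heis_pow g n)"])
      (simp_all add: heis_pow_add mult_le nonneg)
  then have "stable_norm L g = (INF n\<in>{1..}. L (heis_pow g n) / n)"
    unfolding stable_norm_def by (rule limI)
  also have "\<dots> \<le> L (heis_pow g n) / n"
    using assms by (auto intro!: cINF_lower bdd_belowI[where m = 0] divide_nonneg_nonneg nonneg)
  finally show ?thesis .
qed

end

theorem corollary24:
  fixes L :: "heis \<Rightarrow> real"
  assumes "heis_seminorm L"
  shows "\<exists>K::real. \<forall>x y z :: int.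
           stable_norm L (x, y, z) \<le> K * (real_of_int \<bar>x\<bar> + real_of_int \<bar>y\<bar>)"
proof -
  interpret heis_seminormed L
    by (rule heis_seminormed.intro) (rule assms)
  show ?thesis
  proof (intro exI allI)
    fix x y z :: int
    define s where "s = real_of_int \<bar>x\<bar> + real_of_int \<bar>y\<bar>"
    define c where "c = 7 * gen_norm * (\<bar>z\<bar> + 1)"
    have "stable_norm L (x, y, z) \<le> 6 * gen_norm * s + c / real k" if "k \<ge> 1" for k
    proof -
      have "stable_norm L (x, y, z) \<le> L (heis_pow (x, y, z) (k * k)) / real (k * k)"
        using that by (intro stable_norm_le) simp
      also have "\<dots> \<le> (real (k * k) * (6 * gen_norm * s) + real k * c) / real (k * k)"
        using pow_square_le[OF that, of x y z] unfolding s_def c_def by (simp add: divide_right_mono)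
      also have "\<dots> = 6 * gen_norm * s + c / real k"
        using that by (simp add: field_simps)
      finally show ?thesis .
    qed
    moreover have "(\<lambda>k. 6 * gen_norm * s + c / real k) \<longlonglongrightarrow> 6 * gen_norm * s"
      using tendsto_add[OF tendsto_const lim_const_over_n] by simp
    ultimately show "stable_norm L (x, y, z) \<le> 6 * gen_norm * s"
      by (intro LIMSEQ_le_const) auto
  qed
qed

end
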